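(* Let $0\le\alpha\le2$, $1+\mu>0$ and $\gamma>0$. There is a constant $C$, depending only on lower bounds for $\gamma$ and $1+\mu$, such that for every $u\in C^1_0([0,\infty))$ and every $t\ge0$, $$\int_0^t\frac{u^2}{(1+|r-t|)^{2+\mu}}\frac{r^2\,dr}{(1+t+r)^\alpha}+\int_t^\infty\frac{u^2}{(1+|r-t|)^{1-\gamma}}\frac{r^2\,dr}{(1+t+r)^\alpha}\le C\int_0^t\frac{|\partial_ru|^2}{(1+|r-t|)^\mu}\frac{r^2\,dr}{(1+t+r)^\alpha}+C\int_t^\infty|\partial_ru|^2\frac{(1+|r-t|)^{1+\gamma}}{(1+t+r)^\alpha}r^2\,dr .$$
   Context: $C^1_0([0,\infty))$ denotes continuously differentiable functions on $[0,\infty)$ with compact support (not necessarily vanishing at $r=0$). *)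

theory Defs
  imports "HOL-Analysis.Analysis"
begin

definition C1_0_halfline :: "(real \<Rightarrow> real) \<Rightarrow> (real \<Rightarrow> real) \<Rightarrow> bool" where
  "C1_0_halfline u u' \<longleftrightarrow>
     (\<forall>r\<ge>0. (u has_real_derivative u' r) (at r within {0..})) \<and>
     continuous_on {0..} u' \<and>
     (\<exists>R. \<forall>r\<ge>R. u r = 0)"

end

theory Submission
  imports Defs
begin

text \<open>Both sides are weighted Hardy inequalities obtained by integrating one derivative.
  Let \<open>W r = r\<^sup>2 / (1 + t + r) powr \<alpha>\<close>, which is nondecreasing because \<open>\<alpha> \<le> 2\<close>, and let
  \<open>P\<close> be a power of \<open>1 + \<bar>r - t\<bar>\<close>. Then \<open>(u\<^sup>2 P W)' \<ge> 2 u u' P W + u\<^sup>2 P' W\<close>, and by AM-GM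
  \<open>2 u u' P \<ge> - u\<^sup>2 P' / 2 - 2 u'\<^sup>2 P\<^sup>2 / P'\<close>. Integrating over \<open>[t, \<infinity>)\<close> with
  \<open>P = (1 + r - t) powr \<gamma>\<close> bounds the exterior integral and the boundary value \<open>u(t)\<^sup>2 W(t)\<close>;
  integrating over \<open>[0, t]\<close> with \<open>P = (1 + t - r) powr -(1 + \<mu>)\<close> bounds the interior integral
  by that same boundary value.\<close>

lemma set_integral_nonneg:
  fixes f :: "'a \<Rightarrow> real"
  assumes "\<And>x. x \<in> A \<Longrightarrow> 0 \<le> f x"
  shows "0 \<le> (LINT x:A|M. f x)"
  unfolding set_lebesgue_integral_def
  by (rule Bochner_Integration.integral_nonneg) (simp add: indicator_def assms)

lemma set_integral_atLeast_eq_atLeastAtMost: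
  fixes f :: "real \<Rightarrow> real"
  assumes "\<And>x. x > b \<Longrightarrow> f x = 0"
  shows "(LINT x:{a..}|M. f x) = (LINT x:{a..b}|M. f x)"
  unfolding set_lebesgue_integral_def
  by (rule Bochner_Integration.integral_cong) (auto simp: assms split: split_indicator)

lemma set_integral_le_of_deriv_ge:
  fixes F F' g :: "real \<Rightarrow> real"
  assumes "a \<le> b"
    and F: "\<And>x. x \<in> {a..b} \<Longrightarrow> (F has_real_derivative F' x) (at x within {a..b})"
    and g: "continuous_on {a..b} g"
    and le: "\<And>x. x \<in> {a..b} \<Longrightarrow> g x \<le> F' x"
  shows "(LINT x:{a..b}|lborel. g x) \<le> F b - F a"
proof -
  have "(F' has_integral F b - F a) {a..b}"
    using assms(1) F by (intro fundamental_theorem_of_calculus)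
      (auto simp: has_real_derivative_iff_has_vector_derivative)
  moreover have "(g has_integral (LINT x:{a..b}|lborel. g x)) {a..b}"
    using set_borel_integral_eq_integral[OF borel_integrable_atLeastAtMost'[OF g]] by auto
  ultimately show ?thesis
    using le by (meson has_integral_le)
qed

lemma weighted_hardy_interval:
  fixes u u' P P' W W' :: "real \<Rightarrow> real"
  assumes "a \<le> b"
    and u: "\<And>r. r \<in> {a..b} \<Longrightarrow> (u has_real_derivative u' r) (at r within {a..b})"
    and P: "\<And>r. r \<in> {a..b} \<Longrightarrow> (P has_real_derivative P' r) (at r within {a..b})"
    and W: "\<And>r. r \<in> {a..b} \<Longrightarrow> (W has_real_derivative W' r) (at r within {a..b})"
    and cont: "continuous_on {a..b} u'" "continuous_on {a..b} P'"
    and pos: "\<And>r. r \<in> {a..b} \<Longrightarrow> 0 \<le> P r \<and> 0 < P' r \<and> 0 \<le> W r \<and> 0 \<le> W' r"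
  shows "(LINT r:{a..b}|lborel. (u r)\<^sup>2 * P' r * W r) / 2
       - 2 * (LINT r:{a..b}|lborel. (u' r)\<^sup>2 * (P r)\<^sup>2 / P' r * W r)
     \<le> (u b)\<^sup>2 * P b * W b - (u a)\<^sup>2 * P a * W a"
proof -
  define f where "f r = (u r)\<^sup>2 * P' r * W r" for r
  define g where "g r = (u' r)\<^sup>2 * (P r)\<^sup>2 / P' r * W r" for r
  define F' where "F' r = 2 * u r * u' r * P r * W r + (u r)\<^sup>2 * P' r * W r + (u r)\<^sup>2 * P r * W' r" for r
  have "continuous_on {a..b} u" "continuous_on {a..b} P" "continuous_on {a..b} W"
    using u P W by (meson DERIV_continuous_on)+
  then have cf: "continuous_on {a..b} f" and cg: "continuous_on {a..b} g"
    unfolding f_def g_def using cont by (auto intro!: continuous_intros dest!: pos)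
  have "((\<lambda>r. (u r)\<^sup>2 * P r * W r) has_real_derivative F' r) (at r within {a..b})"
    if "r \<in> {a..b}" for r
    using u[OF that] P[OF that] W[OF that]
    by (auto intro!: derivative_eq_intros simp: F'_def algebra_simps)
  moreover have "f r / 2 - 2 * g r \<le> F' r" if r: "r \<in> {a..b}" for r
  proof -
    have "0 \<le> P' r * W r / 2 * (u r + 2 * u' r * P r / P' r)\<^sup>2" "0 \<le> (u r)\<^sup>2 * P r * W' r"
      using pos[OF r] by auto
    moreover have "P' r * W r / 2 * (u r + 2 * u' r * P r / P' r)\<^sup>2
        = f r / 2 + 2 * u r * u' r * P r * W r + 2 * g r"
      using pos[OF r] by (simp add: f_def g_def field_simps power2_eq_square)
    ultimately show ?thesis
      unfolding F'_def f_def by linarith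
  qed
  moreover have "continuous_on {a..b} (\<lambda>r. f r / 2 - 2 * g r)"
    using cf cg by (auto intro!: continuous_intros)
  ultimately have "(LINT r:{a..b}|lborel. f r / 2 - 2 * g r)
      \<le> (u b)\<^sup>2 * P b * W b - (u a)\<^sup>2 * P a * W a"
    by (intro set_integral_le_of_deriv_ge[OF \<open>a \<le> b\<close>])
  moreover have "(LINT r:{a..b}|lborel. f r / 2 - 2 * g r)
      = (LINT r:{a..b}|lborel. f r) / 2 - 2 * (LINT r:{a..b}|lborel. g r)"
    using borel_integrable_atLeastAtMost'[OF cf] borel_integrable_atLeastAtMost'[OF cg]
    by (simp add: set_integral_diff set_integrable_mult_right)
  ultimately show ?thesis
    unfolding f_def g_def by simp
qed

lemma weighted_hardy_power:
  fixes u u' x W W' :: "real \<Rightarrow> real" and d s :: real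
  assumes "a \<le> b"
    and u: "\<And>r. r \<in> {a..b} \<Longrightarrow> (u has_real_derivative u' r) (at r within {a..b})"
    and u': "continuous_on {a..b} u'"
    and x: "\<And>r. r \<in> {a..b} \<Longrightarrow> (x has_real_derivative d) (at r within {a..b})"
    and W: "\<And>r. r \<in> {a..b} \<Longrightarrow> (W has_real_derivative W' r) (at r within {a..b})"
    and "0 < d * s"
    and pos: "\<And>r. r \<in> {a..b} \<Longrightarrow> 0 < x r \<and> 0 \<le> W r \<and> 0 \<le> W' r"
  shows "d * s / 2 * (LINT r:{a..b}|lborel. (u r)\<^sup>2 * x r powr (s - 1) * W r)
       - 2 / (d * s) * (LINT r:{a..b}|lborel. (u' r)\<^sup>2 * x r powr (s + 1) * W r)
     \<le> (u b)\<^sup>2 * x b powr s * W b - (u a)\<^sup>2 * x a powr s * W a"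
proof -
  define c where "c = d * s"
  have "(LINT r:{a..b}|lborel. (u r)\<^sup>2 * (c * x r powr (s - 1)) * W r) / 2
      - 2 * (LINT r:{a..b}|lborel. (u' r)\<^sup>2 * (x r powr s)\<^sup>2 / (c * x r powr (s - 1)) * W r)
     \<le> (u b)\<^sup>2 * x b powr s * W b - (u a)\<^sup>2 * x a powr s * W a"
  proof (rule weighted_hardy_interval[OF \<open>a \<le> b\<close> u _ W u'])
    show "((\<lambda>r. x r powr s) has_real_derivative c * x r powr (s - 1)) (at r within {a..b})"
      if "r \<in> {a..b}" for r
      using x[OF that] pos[OF that] by (auto intro!: derivative_eq_intros simp: c_def)
    show "continuous_on {a..b} (\<lambda>r. c * x r powr (s - 1))"
      using DERIV_continuous_on[OF x] by (auto intro!: continuous_intros dest!: pos)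
    show "0 \<le> x r powr s \<and> 0 < c * x r powr (s - 1) \<and> 0 \<le> W r \<and> 0 \<le> W' r"
      if "r \<in> {a..b}" for r
      using pos[OF that] \<open>0 < d * s\<close> by (simp add: c_def)
  qed (auto simp: u)
  moreover have "(LINT r:{a..b}|lborel. (u r)\<^sup>2 * (c * x r powr (s - 1)) * W r)
      = c * (LINT r:{a..b}|lborel. (u r)\<^sup>2 * x r powr (s - 1) * W r)"
    by (subst set_integral_mult_right[symmetric]) (simp add: ac_simps)
  moreover have "(LINT r:{a..b}|lborel. (u' r)\<^sup>2 * (x r powr s)\<^sup>2 / (c * x r powr (s - 1)) * W r)
      = (LINT r:{a..b}|lborel. (u' r)\<^sup>2 * x r powr (s + 1) * W r) / c"
  proof -
    have "(u' r)\<^sup>2 * (x r powr s)\<^sup>2 / (c * x r powr (s - 1)) * W r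
        = (u' r)\<^sup>2 * x r powr (s + 1) * W r / c"
      if "r \<in> {a..b}" for r
    proof -
      have "(x r powr s)\<^sup>2 = x r powr (s + 1) * x r powr (s - 1)"
        by (simp add: power2_eq_square powr_add[symmetric])
      then show ?thesis
        using pos[OF that] \<open>0 < d * s\<close> by (simp add: c_def field_simps)
    qed
    then show ?thesis
      by (subst set_integral_divide_zero[symmetric], intro set_lebesgue_integral_cong) auto
  qed
  ultimately show ?thesis
    by (simp add: c_def)
qed

lemma C1_0_halfline_eventually_zero:
  assumes "C1_0_halfline u u'"
  shows "eventually (\<lambda>r. u r = 0 \<and> u' r = 0) at_top"
proof -
  obtain R where R: "\<And>r. r \<ge> R \<Longrightarrow> u r = 0"
    using assms by (auto simp: C1_0_halfline_def)
  have "u r = 0 \<and> u' r = 0" if "r \<ge> max R 0 + 1" for r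
  proof -
    have r: "r > max R 0"
      using that by (simp add: max_def split: if_splits)
    have "(u has_real_derivative u' r) (at r within {0..})"
      using assms r by (simp add: C1_0_halfline_def)
    moreover have "at r within {0..} = at r"
      by (rule at_within_interior) (use r in simp)
    ultimately have "(u has_real_derivative u' r) (at r)"
      by simp
    moreover have "(u has_real_derivative 0) (at r)"
      by (rule has_field_derivative_transform_within_open[of "\<lambda>_. 0" _ _ "{max R 0<..}"])
        (use r R in auto)
    ultimately show ?thesis
      using DERIV_unique R r by force
  qed
  then show ?thesis
    by (rule eventually_at_top_linorderI)
qed

lemma C1_0_halfline_restrict:
  assumes "C1_0_halfline u u'" "0 \<le> a"
  shows "\<And>r. r \<in> {a..b} \<Longrightarrow> (u has_real_derivative u' r) (at r within {a..b})"
    and "continuous_on {a..b} u'"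
proof -
  show "(u has_real_derivative u' r) (at r within {a..b})" if "r \<in> {a..b}" for r
  proof (rule DERIV_subset)
    show "(u has_real_derivative u' r) (at r within {0..})"
      using assms that unfolding C1_0_halfline_def by auto
  qed (use assms in auto)
  show "continuous_on {a..b} u'"
    using assms unfolding C1_0_halfline_def
    by (auto intro: continuous_on_subset)
qed

lemma radial_weight_has_nonneg_deriv:
  fixes t \<alpha> :: real
  assumes "0 \<le> t" "\<alpha> \<le> 2"
  obtains W' where
    "\<And>r S. 0 \<le> r \<Longrightarrow> ((\<lambda>r. r\<^sup>2 / (1 + t + r) powr \<alpha>) has_real_derivative W' r) (at r within S)"
    "\<And>r. 0 \<le> r \<Longrightarrow> 0 \<le> W' r"
proof
  fix r S assume "0 \<le> (r::real)"
  define z where "z = 1 + t + r"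
  have z: "0 < z" "z powr (\<alpha> - 1) = z powr \<alpha> / z" "z powr (\<alpha> + 1) = z powr \<alpha> * z"
    using assms \<open>0 \<le> r\<close> by (simp_all add: z_def powr_add powr_diff)
  have "((\<lambda>r. r\<^sup>2 / (1 + t + r) powr \<alpha>) has_real_derivative
      (2 * r * z powr \<alpha> - r\<^sup>2 * (\<alpha> * z powr (\<alpha> - 1))) / (z powr \<alpha> * z powr \<alpha>)) (at r within S)"
    using z(1) unfolding z_def by (auto intro!: derivative_eq_intros)
  moreover have "(2 * r * z powr \<alpha> - r\<^sup>2 * (\<alpha> * z powr (\<alpha> - 1))) / (z powr \<alpha> * z powr \<alpha>)
      = r * (2 * z - \<alpha> * r) / z powr (\<alpha> + 1)"
    using z by (simp add: field_simps power2_eq_square)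
  ultimately show "((\<lambda>r. r\<^sup>2 / (1 + t + r) powr \<alpha>) has_real_derivative
      r * (2 * (1 + t + r) - \<alpha> * r) / (1 + t + r) powr (\<alpha> + 1)) (at r within S)"
    by (simp add: z_def)
  show "0 \<le> r * (2 * (1 + t + r) - \<alpha> * r) / (1 + t + r) powr (\<alpha> + 1)"
    using assms \<open>0 \<le> r\<close> mult_right_mono[OF \<open>\<alpha> \<le> 2\<close> \<open>0 \<le> r\<close>] by simp
qed

lemma hardy_interior:
  fixes u u' :: "real \<Rightarrow> real" and t \<alpha> \<mu> :: real
  assumes "0 < 1 + \<mu>" "\<alpha> \<le> 2" "C1_0_halfline u u'" "0 \<le> t"
  shows "(1 + \<mu>) / 2 * (LINT r:{0..t}|lborel. (u r)\<^sup>2 / (1 + \<bar>r - t\<bar>) powr (2 + \<mu>) * r\<^sup>2 / (1 + t + r) powr \<alpha>)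
       - 2 / (1 + \<mu>) * (LINT r:{0..t}|lborel. (u' r)\<^sup>2 / (1 + \<bar>r - t\<bar>) powr \<mu> * r\<^sup>2 / (1 + t + r) powr \<alpha>)
     \<le> (u t)\<^sup>2 * t\<^sup>2 / (1 + t + t) powr \<alpha>"
proof -
  obtain W' where W':
    "\<And>r S. 0 \<le> r \<Longrightarrow> ((\<lambda>r. r\<^sup>2 / (1 + t + r) powr \<alpha>) has_real_derivative W' r) (at r within S)"
    "\<And>r. 0 \<le> r \<Longrightarrow> 0 \<le> W' r"
    using radial_weight_has_nonneg_deriv assms(2,4) by blast
  note u = C1_0_halfline_restrict[OF assms(3) order.refl, where b = t]
  have x: "((\<lambda>r. 1 + t - r) has_real_derivative -1) (at r within {0..t})" for r
    by (auto intro!: derivative_eq_intros)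
  have "(-1) * (-(1 + \<mu>)) / 2 * (LINT r:{0..t}|lborel. (u r)\<^sup>2 * (1 + t - r) powr (-(1 + \<mu>) - 1) * (r\<^sup>2 / (1 + t + r) powr \<alpha>))
      - 2 / ((-1) * (-(1 + \<mu>))) * (LINT r:{0..t}|lborel. (u' r)\<^sup>2 * (1 + t - r) powr (-(1 + \<mu>) + 1) * (r\<^sup>2 / (1 + t + r) powr \<alpha>))
     \<le> (u t)\<^sup>2 * (1 + t - t) powr (-(1 + \<mu>)) * (t\<^sup>2 / (1 + t + t) powr \<alpha>)
      - (u 0)\<^sup>2 * (1 + t - 0) powr (-(1 + \<mu>)) * (0\<^sup>2 / (1 + t + 0) powr \<alpha>)"
    using assms by (intro weighted_hardy_power[OF \<open>0 \<le> t\<close> u x W'(1)]) (auto intro: W'(2))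
  moreover have "(LINT r:{0..t}|lborel. (u r)\<^sup>2 * (1 + t - r) powr (-(1 + \<mu>) - 1) * (r\<^sup>2 / (1 + t + r) powr \<alpha>))
      = (LINT r:{0..t}|lborel. (u r)\<^sup>2 / (1 + \<bar>r - t\<bar>) powr (2 + \<mu>) * r\<^sup>2 / (1 + t + r) powr \<alpha>)"
    by (intro set_lebesgue_integral_cong) (auto simp: divide_powr_uminus abs_of_nonpos add_diff_eq)
  moreover have "(LINT r:{0..t}|lborel. (u' r)\<^sup>2 * (1 + t - r) powr (-(1 + \<mu>) + 1) * (r\<^sup>2 / (1 + t + r) powr \<alpha>))
      = (LINT r:{0..t}|lborel. (u' r)\<^sup>2 / (1 + \<bar>r - t\<bar>) powr \<mu> * r\<^sup>2 / (1 + t + r) powr \<alpha>)"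
    by (intro set_lebesgue_integral_cong) (auto simp: divide_powr_uminus abs_of_nonpos add_diff_eq)
  ultimately show ?thesis
    by (simp add: add.commute)
qed

lemma hardy_exterior:
  fixes u u' :: "real \<Rightarrow> real" and t \<alpha> \<gamma> :: real
  assumes "0 < \<gamma>" "\<alpha> \<le> 2" "C1_0_halfline u u'" "0 \<le> t"
  shows "\<gamma> / 2 * (LINT r:{t..}|lborel. (u r)\<^sup>2 / (1 + \<bar>r - t\<bar>) powr (1 - \<gamma>) * r\<^sup>2 / (1 + t + r) powr \<alpha>)
       + (u t)\<^sup>2 * t\<^sup>2 / (1 + t + t) powr \<alpha>
     \<le> 2 / \<gamma> * (LINT r:{t..}|lborel. (u' r)\<^sup>2 * (1 + \<bar>r - t\<bar>) powr (1 + \<gamma>) / (1 + t + r) powr \<alpha> * r\<^sup>2)"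
proof -
  obtain W' where W':
    "\<And>r S. 0 \<le> r \<Longrightarrow> ((\<lambda>r. r\<^sup>2 / (1 + t + r) powr \<alpha>) has_real_derivative W' r) (at r within S)"
    "\<And>r. 0 \<le> r \<Longrightarrow> 0 \<le> W' r"
    using radial_weight_has_nonneg_deriv assms(2,4) by blast
  have "eventually (\<lambda>r. t \<le> r \<and> u r = 0 \<and> u' r = 0) at_top"
    using C1_0_halfline_eventually_zero[OF assms(3)] eventually_ge_at_top[of t]
    by eventually_elim simp
  then obtain R where R: "\<And>r. R \<le> r \<Longrightarrow> t \<le> r \<and> u r = 0 \<and> u' r = 0"
    by (auto simp: eventually_at_top_linorder)
  then have "t \<le> R"
    by blast
  note u = C1_0_halfline_restrict[OF assms(3,4), where b = R]
  have x: "((\<lambda>r. 1 + r - t) has_real_derivative 1) (at r within {t..R})" for r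
    by (auto intro!: derivative_eq_intros)
  have "1 * \<gamma> / 2 * (LINT r:{t..R}|lborel. (u r)\<^sup>2 * (1 + r - t) powr (\<gamma> - 1) * (r\<^sup>2 / (1 + t + r) powr \<alpha>))
      - 2 / (1 * \<gamma>) * (LINT r:{t..R}|lborel. (u' r)\<^sup>2 * (1 + r - t) powr (\<gamma> + 1) * (r\<^sup>2 / (1 + t + r) powr \<alpha>))
     \<le> (u R)\<^sup>2 * (1 + R - t) powr \<gamma> * (R\<^sup>2 / (1 + t + R) powr \<alpha>)
      - (u t)\<^sup>2 * (1 + t - t) powr \<gamma> * (t\<^sup>2 / (1 + t + t) powr \<alpha>)"
    using assms by (intro weighted_hardy_power[OF \<open>t \<le> R\<close> u x W'(1)]) (auto intro: W'(2))
  moreover have "(LINT r:{t..}|lborel. (u r)\<^sup>2 / (1 + \<bar>r - t\<bar>) powr (1 - \<gamma>) * r\<^sup>2 / (1 + t + r) powr \<alpha>)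
      = (LINT r:{t..R}|lborel. (u r)\<^sup>2 * (1 + r - t) powr (\<gamma> - 1) * (r\<^sup>2 / (1 + t + r) powr \<alpha>))"
    using R by (subst set_integral_atLeast_eq_atLeastAtMost[where b = R])
      (auto intro!: set_lebesgue_integral_cong simp: divide_powr_uminus add_diff_eq)
  moreover have "(LINT r:{t..}|lborel. (u' r)\<^sup>2 * (1 + \<bar>r - t\<bar>) powr (1 + \<gamma>) / (1 + t + r) powr \<alpha> * r\<^sup>2)
      = (LINT r:{t..R}|lborel. (u' r)\<^sup>2 * (1 + r - t) powr (\<gamma> + 1) * (r\<^sup>2 / (1 + t + r) powr \<alpha>))"
    using R by (subst set_integral_atLeast_eq_atLeastAtMost[where b = R])
      (auto intro!: set_lebesgue_integral_cong simp: add_diff_eq ac_simps)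
  moreover have "u R = 0"
    using R by blast
  ultimately show ?thesis
    by simp
qed

lemma interior_exterior_combine:
  fixes Ai Bi Ao Bo K c g C :: real
  assumes "0 < c" "0 < g" "0 \<le> K" "0 \<le> Ao" "0 \<le> Bi"
    and inner: "c / 2 * Ai - 2 / c * Bi \<le> K"
    and outer: "g / 2 * Ao + K \<le> 2 / g * Bo"
    and C: "(2 / c + 2 / g)\<^sup>2 \<le> C"
  shows "Ai + Ao \<le> C * Bi + C * Bo"
proof -
  define p q where "p = 2 / c" and "q = 2 / g"
  have "0 < p" "0 < q"
    using assms by (simp_all add: p_def q_def)
  have Ai: "Ai \<le> p * K + p\<^sup>2 * Bi"
  proof -
    have "Ai = p * (c / 2 * Ai)"
      using \<open>0 < c\<close> by (simp add: p_def)
    also have "\<dots> \<le> p * (K + p * Bi)"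
      using inner \<open>0 < p\<close> by (intro mult_left_mono) (auto simp: p_def)
    finally show ?thesis
      by (simp add: algebra_simps power2_eq_square)
  qed
  have Ao: "Ao \<le> q\<^sup>2 * Bo - q * K"
  proof -
    have "Ao = q * (g / 2 * Ao)"
      using \<open>0 < g\<close> by (simp add: q_def)
    also have "\<dots> \<le> q * (q * Bo - K)"
      using outer \<open>0 < q\<close> by (intro mult_left_mono) (auto simp: q_def)
    finally show ?thesis
      by (simp add: algebra_simps power2_eq_square)
  qed
  have "0 \<le> g / 2 * Ao"
    using assms by simp
  then have "K \<le> q * Bo"
    using outer by (simp add: q_def)
  then have pK: "p * K \<le> p * q * Bo" and "0 \<le> q * Bo"
    using \<open>0 < p\<close> \<open>0 \<le> K\<close> by simp_all
  then have "0 \<le> Bo"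
    using \<open>0 < q\<close> by (simp add: zero_le_mult_iff)
  have "0 \<le> q * K"
    using \<open>0 < q\<close> \<open>0 \<le> K\<close> by simp
  then have "Ai + Ao \<le> p\<^sup>2 * Bi + (p * q + q\<^sup>2) * Bo"
    using Ai Ao pK by (simp add: algebra_simps)
  also have "\<dots> \<le> (p + q)\<^sup>2 * (Bi + Bo)"
    using \<open>0 < p\<close> \<open>0 < q\<close> \<open>0 \<le> Bi\<close> \<open>0 \<le> Bo\<close>
    by (simp add: power2_eq_square algebra_simps)
  also have "\<dots> \<le> C * (Bi + Bo)"
    using C \<open>0 \<le> Bi\<close> \<open>0 \<le> Bo\<close> by (intro mult_right_mono) (auto simp: p_def q_def)
  finally show ?thesis
    by (simp add: distrib_left)
qed

lemma hardy_interior_exterior: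
  fixes u u' :: "real \<Rightarrow> real" and t \<alpha> \<mu> \<gamma> C :: real
  assumes "0 < 1 + \<mu>" "0 < \<gamma>" "\<alpha> \<le> 2" "C1_0_halfline u u'" "0 \<le> t"
    and "(2 / (1 + \<mu>) + 2 / \<gamma>)\<^sup>2 \<le> C"
  shows "(LINT r:{0..t}|lborel. (u r)\<^sup>2 / (1 + \<bar>r - t\<bar>) powr (2 + \<mu>) * r\<^sup>2 / (1 + t + r) powr \<alpha>)
       + (LINT r:{t..}|lborel. (u r)\<^sup>2 / (1 + \<bar>r - t\<bar>) powr (1 - \<gamma>) * r\<^sup>2 / (1 + t + r) powr \<alpha>)
     \<le> C * (LINT r:{0..t}|lborel. (u' r)\<^sup>2 / (1 + \<bar>r - t\<bar>) powr \<mu> * r\<^sup>2 / (1 + t + r) powr \<alpha>)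
       + C * (LINT r:{t..}|lborel. (u' r)\<^sup>2 * (1 + \<bar>r - t\<bar>) powr (1 + \<gamma>) / (1 + t + r) powr \<alpha> * r\<^sup>2)"
  using assms
  by (intro interior_exterior_combine[OF assms(1,2) _ _ _ hardy_interior hardy_exterior])
    (auto intro!: set_integral_nonneg)

theorem lemma13p1:
  fixes \<gamma>0 m0 :: real
  assumes "\<gamma>0 > 0" and "m0 > 0"
  shows "\<exists>C::real. \<forall>\<alpha> \<mu> \<gamma> :: real. \<forall>u u' :: real \<Rightarrow> real. \<forall>t::real.
    0 \<le> \<alpha> \<and> \<alpha> \<le> 2 \<and> 1 + \<mu> \<ge> m0 \<and> \<gamma> \<ge> \<gamma>0 \<and> C1_0_halfline u u' \<and> t \<ge> 0 \<longrightarrow>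
    (LINT r:{0..t}|lborel. (u r)\<^sup>2 / (1 + \<bar>r - t\<bar>) powr (2 + \<mu>) * r\<^sup>2 / (1 + t + r) powr \<alpha>)
  + (LINT r:{t..}|lborel. (u r)\<^sup>2 / (1 + \<bar>r - t\<bar>) powr (1 - \<gamma>) * r\<^sup>2 / (1 + t + r) powr \<alpha>)
  \<le> C * (LINT r:{0..t}|lborel. (u' r)\<^sup>2 / (1 + \<bar>r - t\<bar>) powr \<mu> * r\<^sup>2 / (1 + t + r) powr \<alpha>)
  + C * (LINT r:{t..}|lborel. (u' r)\<^sup>2 * (1 + \<bar>r - t\<bar>) powr (1 + \<gamma>) / (1 + t + r) powr \<alpha> * r\<^sup>2)"
  by (intro exI[of _ "(2 / m0 + 2 / \<gamma>0)\<^sup>2"] allI impI, elim conjE, rule hardy_interior_exterior)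
    (use assms in \<open>auto intro!: power_mono add_mono divide_left_mono\<close>)

end
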